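(* Let $w_1=a$, $w_2=b$, $w_3=ba$, $w_4=baabbaa$, and $w_n = b\cdot\mathit{TM}_{2n-8}\cdot\overline{\mathit{TM}_{2n-6}}\cdot\overline{\mathit{TM}_{2n-6}}'$ for $n\ge 5$, and let $W=w_1w_2w_3\cdots$ be their infinite concatenation. Then $\tau^2(W)=W$.
   Context: Strings are over $\{a,b\}$. For a binary string $w$, $\overline{w}$ is obtained by exchanging $a$ and $b$ letterwise, and $w'$ is $w$ with its last letter removed; $\overline{w}'$ means $(\overline{w})'$. Thue–Morse words: $\mathit{TM}_0=a$ and $\mathit{TM}_k=\mathit{TM}_{k-1}\cdot\overline{\mathit{TM}_{k-1}}$ for $k\ge1$. The Thue–Morse morphism $\tau$ is the morphism with $\tau(a)=ab$, $\tau(b)=ba$, extended letterwise to infinite words; $\tau^2=\tau\circ\tau$. *)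

theory Defs
  imports Main
begin

datatype letter = A | B

fun flip :: "letter \<Rightarrow> letter" where
  "flip A = B" | "flip B = A"

definition bar :: "letter list \<Rightarrow> letter list" where
  "bar w = map flip w"

fun TM :: "nat \<Rightarrow> letter list" where
  "TM 0 = [A]"
| "TM (Suc k) = TM k @ bar (TM k)"

fun tau_letter :: "letter \<Rightarrow> letter list" where
  "tau_letter A = [A, B]"
| "tau_letter B = [B, A]"

definition tau_inf :: "(nat \<Rightarrow> letter) \<Rightarrow> (nat \<Rightarrow> letter)" where
  "tau_inf x = (\<lambda>i. tau_letter (x (i div 2)) ! (i mod 2))"

(* the words w_n, n \<ge> 1 (w 0 is unused) ; w' = butlast w *)
definition w :: "nat \<Rightarrow> letter list" where
  "w n = (if n = 1 then [A]
          else if n = 2 then [B]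
          else if n = 3 then [B, A]
          else if n = 4 then [B, A, A, B, B, A, A]
          else [B] @ TM (2*n - 8) @ bar (TM (2*n - 6)) @ butlast (bar (TM (2*n - 6))))"

(* infinite concatenation ws 0 ws 1 ws 2 ... of a sequence of nonempty finite words:
   position i lies within the concatenation of the first i+1 words *)
definition infconcat :: "(nat \<Rightarrow> 'a list) \<Rightarrow> nat \<Rightarrow> 'a" where
  "infconcat ws i = concat (map ws [0..<Suc i]) ! i"

definition W :: "nat \<Rightarrow> letter" where
  "W = infconcat (\<lambda>k. w (Suc k))"

end

theory Submission
  imports Defs
begin

text \<open>\<open>W\<close> is the Thue--Morse sequence \<open>t\<close>, given by \<open>t 0 = a\<close>, \<open>t (2n) = t n\<close> and
  \<open>t (2n+1) = flip (t n)\<close>; this recursion says exactly that \<open>t\<close> is a fixed point of \<open>\<tau>\<close>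
  itself, not only of \<open>\<tau>\<^sup>2\<close>. To identify \<open>W\<close> with \<open>t\<close>: with \<open>T = TM\<^bsub>2m+2\<^esub>\<close>, the
  prefix \<open>w\<^sub>1 \<cdots> w\<^bsub>m+4\<^esub>\<close> telescopes to \<open>T \<cdot> bar T \<cdot> (bar T)'\<close>, and as \<open>T\<close> ends in \<open>a\<close>
  this is \<open>TM\<^bsub>2m+4\<^esub> = T \<cdot> bar T \<cdot> bar T \<cdot> T\<close> with its last \<open>|T| + 1\<close> letters removed.
  Finally every \<open>TM\<^sub>k\<close> is a prefix of \<open>t\<close>.\<close>

lemma flip_flip [simp]: "flip (flip c) = c"
  by (cases c) auto

lemma bar_bar [simp]: "bar (bar u) = u"
  by (simp add: bar_def comp_def)

lemma bar_eq_Nil_iff [simp]: "bar u = [] \<longleftrightarrow> u = []"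
  by (simp add: bar_def)

lemma length_bar [simp]: "length (bar u) = length u"
  by (simp add: bar_def)

lemma bar_append [simp]: "bar (u @ v) = bar u @ bar v"
  by (simp add: bar_def)

lemma last_bar: "u \<noteq> [] \<Longrightarrow> last (bar u) = flip (last u)"
  by (simp add: bar_def last_map)

function thue_morse :: "nat \<Rightarrow> letter" where
  "thue_morse 0 = A"
| "thue_morse (Suc n) =
     (if even (Suc n) then thue_morse (Suc n div 2) else flip (thue_morse (Suc n div 2)))"
  by pat_completeness auto
termination by (relation "measure id") (simp_all, presburger)

lemma thue_morse_rec:
  "thue_morse n = (if even n then thue_morse (n div 2) else flip (thue_morse (n div 2)))"
  by (cases n) auto

lemma tau_inf_thue_morse: "tau_inf thue_morse = thue_morse"
proof
  fix i
  show "tau_inf thue_morse i = thue_morse i"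
    unfolding tau_inf_def thue_morse_rec [of i]
    by (cases "thue_morse (i div 2)"; cases "even i") (auto simp: mod_2_eq_odd)
qed

lemma thue_morse_power_add:
  "j < 2 ^ k \<Longrightarrow> thue_morse (2 ^ k + j) = flip (thue_morse j)"
proof (induction k arbitrary: j)
  case 0
  then show ?case by simp
next
  case (Suc k)
  have "(2 ^ Suc k + j) div 2 = 2 ^ k + j div 2" and "even (2 ^ Suc k + j) = even j"
    by simp_all
  then have "thue_morse (2 ^ Suc k + j) =
      (if even j then thue_morse (2 ^ k + j div 2) else flip (thue_morse (2 ^ k + j div 2)))"
    by (subst thue_morse_rec) (simp only:)
  moreover have "thue_morse (2 ^ k + j div 2) = flip (thue_morse (j div 2))"
    using Suc by simp
  ultimately show ?case
    by (simp add: thue_morse_rec [of j] del: thue_morse.simps)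
qed

lemma length_TM [simp]: "length (TM k) = 2 ^ k"
  by (induction k) auto

lemma nth_TM: "i < 2 ^ k \<Longrightarrow> TM k ! i = thue_morse i"
proof (induction k arbitrary: i)
  case 0
  then show ?case by simp
next
  case (Suc k)
  show ?case
  proof (cases "i < 2 ^ k")
    case True
    then show ?thesis using Suc by (simp add: nth_append)
  next
    case False
    with Suc.prems obtain j where "i = 2 ^ k + j" "j < 2 ^ k"
      by (metis add_diff_inverse_nat mult_2 nat_add_left_cancel_less power_Suc)
    then show ?thesis
      using Suc.IH [of j] thue_morse_power_add [of j k] by (simp add: nth_append bar_def)
  qed
qed

lemma TM_ne_Nil: "TM k \<noteq> []"
  using length_TM [of k] by (metis list.size(3) power_not_zero zero_neq_numeral)

lemma last_TM: "last (TM k) = (if even k then A else B)"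
  by (induction k) (auto simp: TM_ne_Nil last_bar last_append)

lemma TM_add_2_even:
  assumes "even k"
  shows "TM (k + 2) = TM k @ bar (TM k) @ butlast (bar (TM k)) @ B # TM k"
proof -
  have "last (bar (TM k)) = B"
    using TM_ne_Nil last_TM [of k] assms by (simp add: last_bar)
  then have "bar (TM k) = butlast (bar (TM k)) @ [B]"
    using TM_ne_Nil by (metis append_butlast_last_id bar_eq_Nil_iff)
  then have "bar (TM k) @ TM k = butlast (bar (TM k)) @ B # TM k"
    by (metis append.assoc append_Cons append_Nil)
  then show ?thesis
    by simp
qed

lemma length_concat_map_upt_ge:
  "(\<And>k. ws k \<noteq> []) \<Longrightarrow> n \<le> length (concat (map ws [0..<n]))"
proof (induction n)
  case (Suc n)
  have "n \<le> length (concat (map ws [0..<n]))"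
    using Suc by blast
  moreover have "0 < length (ws n)"
    using Suc.prems by simp
  moreover have "length (concat (map ws [0..<Suc n])) =
      length (concat (map ws [0..<n])) + length (ws n)"
    by simp
  ultimately show ?case
    by linarith
qed simp

lemma nth_infconcat:
  assumes "\<And>k. ws k \<noteq> []" and "i < length (concat (map ws [0..<n]))"
  shows "infconcat ws i = concat (map ws [0..<n]) ! i"
proof -
  let ?prefix = "\<lambda>m. concat (map ws [0..<m])"
  have nth_prefix_add: "?prefix (m + d) ! i = ?prefix m ! i" if "i < length (?prefix m)" for m d
    using that by (simp add: upt_add_eq_append [of 0 m d] nth_append)
  have "i < length (?prefix (Suc i))"
    using length_concat_map_upt_ge [of ws "Suc i"] assms(1) by simp
  then have "?prefix (Suc i) ! i = ?prefix n ! i"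
    using nth_prefix_add [of "Suc i" "n - Suc i"] nth_prefix_add [of n "Suc i - n"] assms(2)
    by (cases "Suc i \<le> n")
      (simp_all only: le_add_diff_inverse le_add_diff_inverse2 not_le less_imp_le)
  then show ?thesis
    unfolding infconcat_def .
qed

definition W_prefix :: "nat \<Rightarrow> letter list" where
  "W_prefix n = concat (map (\<lambda>k. w (Suc k)) [0..<n])"

lemma W_prefix_Suc: "W_prefix (Suc n) = W_prefix n @ w (Suc n)"
  by (simp add: W_prefix_def)

lemma W_prefix_eq:
  "W_prefix (m + 4) = TM (2 * m + 2) @ bar (TM (2 * m + 2)) @ butlast (bar (TM (2 * m + 2)))"
proof (induction m)
  case 0
  show ?case by (simp add: W_prefix_def w_def bar_def numeral_eq_Suc)
next
  case (Suc m)
  let ?T = "TM (2 * m + 2)" and ?T' = "TM (2 * m + 4)"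
  have w: "w (Suc (m + 4)) = B # ?T @ bar ?T' @ butlast (bar ?T')"
    by (simp add: w_def algebra_simps del: TM.simps)
  have T': "?T' = ?T @ bar ?T @ butlast (bar ?T) @ B # ?T"
  proof -
    have "even (2 * m + 2)" and "2 * m + 2 + 2 = 2 * m + 4"
      by simp_all
    then show ?thesis
      using TM_add_2_even [of "2 * m + 2"] by (simp only:)
  qed
  have "W_prefix (Suc m + 4) = W_prefix (m + 4) @ w (Suc (m + 4))"
    by (simp only: add_Suc W_prefix_Suc)
  also have "\<dots> = (?T @ bar ?T @ butlast (bar ?T) @ B # ?T) @ bar ?T' @ butlast (bar ?T')"
    unfolding Suc.IH w by (simp only: append_assoc append_Cons)
  also have "\<dots> = ?T' @ bar ?T' @ butlast (bar ?T')"
    unfolding T' [symmetric] ..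
  also have "2 * m + 4 = 2 * Suc m + 2"
    by simp
  finally show ?case .
qed

lemma TM_eq_W_prefix: "TM (2 * m + 4) = W_prefix (m + 4) @ B # TM (2 * m + 2)"
proof -
  have "even (2 * m + 2)" and "2 * m + 2 + 2 = 2 * m + 4"
    by simp_all
  then show ?thesis
    using TM_add_2_even [of "2 * m + 2"] by (simp only: W_prefix_eq append_assoc)
qed

lemma W_eq_thue_morse: "W = thue_morse"
proof
  fix i
  have w_ne_Nil: "w (Suc k) \<noteq> []" for k
    by (simp add: w_def)
  have "i < length (W_prefix (i + 4))"
    using length_concat_map_upt_ge [of "\<lambda>k. w (Suc k)" "i + 4"] w_ne_Nil
    unfolding W_prefix_def by simp
  moreover have "length (W_prefix (i + 4)) < 2 ^ (2 * i + 4)"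
    using arg_cong [OF TM_eq_W_prefix [of i], of length] by simp
  ultimately have "W_prefix (i + 4) ! i = thue_morse i"
    using nth_TM [of i "2 * i + 4"] by (simp add: TM_eq_W_prefix nth_append)
  moreover have "W i = W_prefix (i + 4) ! i"
    using nth_infconcat [of "\<lambda>k. w (Suc k)" i "i + 4"] w_ne_Nil
      \<open>i < length (W_prefix (i + 4))\<close>
    unfolding W_def W_prefix_def by simp
  ultimately show "W i = thue_morse i"
    by simp
qed

theorem mainTheorem10:
  shows "tau_inf (tau_inf W) = W"
  by (simp add: W_eq_thue_morse tau_inf_thue_morse)

end
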